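(* The category $\mathfrak{B}$ whose objects are Bochvar algebras and whose morphisms are homomorphisms of Bochvar algebras is equivalent to the category $\mathfrak{S}$ whose objects are Bochvar systems and whose morphisms are the Bochvar-system morphisms defined below. The equivalence is given by the functors $\Gamma:\mathfrak{B}\to\mathfrak{S}$ and $\Xi:\mathfrak{S}\to\mathfrak{B}$ described below.
   Context: Let $\mathbf{WK}^e$ be the three-element algebra on $\{0,\tfrac12,1\}$ of type $\langle \wedge,\vee,\neg,J_2,0,1\rangle$ (arities $2,2,1,1,0,0$). Its operations are: - $\neg$ swaps $0$ and $1$ and fixes $\tfrac12$; - $\wedge,\vee$ agree with the two-element Boolean operations on $\{0,1\}$ and return $\tfrac12$ whenever an argument is $\tfrac12$; - $J_2(1)=1$ and $J_2(\tfrac12)=J_2(0)=0$. A Bochvar algebra is a member of the quasivariety $ISP(\mathbf{WK}^e)$. Płonka sums. A semilattice direct system consists of: - a join-semilattice $\langle I,\vee,i_0\rangle$ with least element $i_0$; - pairwise disjoint similar algebras $\mathbf{A}_i$ ($i\in I$), called fibres; - homomorphisms $p_{ij}:\mathbf{A}_i\to\mathbf{A}_j$ for $i\le j$, with $p_{ii}=\mathrm{id}$ and $p_{jk}\circ p_{ij}=p_{ik}$. Its Płonka sum has universe $\bigsqcup_i A_i$. Operations are $g(a_1,\dots,a_n)=g^{\mathbf{A}_k}(p_{i_1k}(a_1),\dots,p_{i_nk}(a_n))$ for $a_m\in A_{i_m}$ and $k=i_1\vee\dots\vee i_n$; constants are taken from $\mathbf{A}_{i_0}$. Every Bochvar algebra's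 $\{\wedge,\vee,\neg,0,1\}$-reduct is canonically (up to isomorphism) a Płonka sum of Boolean algebras, with bottom fibre $\mathbf{A}_{i_0}$. Two elements $a,b$ lie in the same fibre iff $a\wedge(a\vee b)=a$ and $b\wedge(b\vee a)=b$. A Bochvar system is a pair $\langle\mathbf{B},\mathbf{I}\rangle$ where $\mathbf{B}$ is a Boolean algebra and $I\subseteq B$ contains $1$ and is closed under $\wedge$. A morphism $\langle\mathbf{B}_1,\mathbf{I}_1\rangle\to\langle\mathbf{B}_2,\mathbf{I}_2\rangle$ is a Boolean homomorphism $g:\mathbf{B}_1\to\mathbf{B}_2$ with $g(I_1)\subseteq I_2$. The functor $\Gamma$: - On a Bochvar algebra $\mathbf{A}$ with fibres $\mathbf{A}_i$, set $\Gamma(\mathbf{A})=\langle\mathbf{A}_{i_0},K\rangle$ with $K=\{J_2(1^{A_i}):i\in I\}$, where $1^{A_i}$ is the top of fibre $\mathbf{A}_i$. - On a homomorphism $f$, $\Gamma(f)$ is the restriction of $f$ to the bottom fibre. The functor $\Xi$. For a Bochvar system $\langle\mathbf{B},\mathbf{I}\rangle$, write $[i)$ for the principal filter of $\mathbf{B}$ generated by $i$, and $\mathbf{B}/[i)$ for the quotient by the congruence associated to $[i)$. - $\Xi(\langle\mathbf{B},\mathbf{I}\rangle)$ is the unique Bochvar algebra whose involutive-bisemilattice reduct is the Płonka sum of the following system: index semilattice $I$ with the order dual to that of $\mathbf{B}$ (so $1$ is least); fibres $\mathbf{B}/[i)$; maps $p_{ij}(a/[i))=a/[j)$. Its $J_2$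 sends $a/[i)$ to the unique element of the bottom fibre $\mathbf{B}/[1)\cong\mathbf{B}$ lying in $[0,i]$ and congruent to $a$ modulo $[i)$. - On a morphism $g$, $\Xi(g)(a/[i))=g(a)/[g(i))$. *)

theory Defs
  imports Main
begin

datatype wk = WZero | WHalf | WOne

fun wk_neg :: "wk \<Rightarrow> wk" where
  "wk_neg WZero = WOne" | "wk_neg WOne = WZero" | "wk_neg WHalf = WHalf"

definition wk_meet :: "wk \<Rightarrow> wk \<Rightarrow> wk" where
  "wk_meet x y = (if x = WHalf \<or> y = WHalf then WHalf
                  else if x = WOne \<and> y = WOne then WOne else WZero)"

definition wk_join :: "wk \<Rightarrow> wk \<Rightarrow> wk" where
  "wk_join x y = (if x = WHalf \<or> y = WHalf then WHalf
                  else if x = WOne \<or> y = WOne then WOne else WZero)"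

definition wk_J2 :: "wk \<Rightarrow> wk" where
  "wk_J2 x = (if x = WOne then WOne else WZero)"

record 'a balg =
  ba_carrier :: "'a set"
  ba_meet :: "'a \<Rightarrow> 'a \<Rightarrow> 'a"
  ba_join :: "'a \<Rightarrow> 'a \<Rightarrow> 'a"
  ba_neg :: "'a \<Rightarrow> 'a"
  ba_J2 :: "'a \<Rightarrow> 'a"
  ba_zero :: "'a"
  ba_one :: "'a"

definition balg_wf :: "'a balg \<Rightarrow> bool" where
  "balg_wf A \<longleftrightarrow>
     (\<forall>x\<in>ba_carrier A. \<forall>y\<in>ba_carrier A.
        ba_meet A x y \<in> ba_carrier A \<and> ba_join A x y \<in> ba_carrier A) \<and>
     (\<forall>x\<in>ba_carrier A. ba_neg A x \<in> ba_carrier A \<and> ba_J2 A x \<in> ba_carrier A) \<and>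
     ba_zero A \<in> ba_carrier A \<and> ba_one A \<in> ba_carrier A"

text \<open>A Bochvar algebra is a member of ISP(WK^e): it is (isomorphic to) a subalgebra of a
  direct power (WK^e)^X.  The index set X is taken in the type of maps from the carrier into
  the three-element set (which is large enough for every such embedding).\<close>

definition bochvar_alg :: "'a balg \<Rightarrow> bool" where
  "bochvar_alg A \<longleftrightarrow> balg_wf A \<and>
     (\<exists>(X :: ('a \<Rightarrow> wk) set) (e :: 'a \<Rightarrow> ('a \<Rightarrow> wk) \<Rightarrow> wk).
        (\<forall>x\<in>ba_carrier A. \<forall>y\<in>ba_carrier A. (\<forall>i\<in>X. e x i = e y i) \<longrightarrow> x = y) \<and>
        (\<forall>x\<in>ba_carrier A. \<forall>y\<in>ba_carrier A. \<forall>i\<in>X.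
            e (ba_meet A x y) i = wk_meet (e x i) (e y i) \<and>
            e (ba_join A x y) i = wk_join (e x i) (e y i)) \<and>
        (\<forall>x\<in>ba_carrier A. \<forall>i\<in>X.
            e (ba_neg A x) i = wk_neg (e x i) \<and> e (ba_J2 A x) i = wk_J2 (e x i)) \<and>
        (\<forall>i\<in>X. e (ba_zero A) i = WZero \<and> e (ba_one A) i = WOne))"

definition balg_hom :: "'a balg \<Rightarrow> 'c balg \<Rightarrow> ('a \<Rightarrow> 'c) \<Rightarrow> bool" where
  "balg_hom A C f \<longleftrightarrow>
     (\<forall>x\<in>ba_carrier A. f x \<in> ba_carrier C) \<and>
     (\<forall>x\<in>ba_carrier A. \<forall>y\<in>ba_carrier A.
        f (ba_meet A x y) = ba_meet C (f x) (f y) \<and> f (ba_join A x y) = ba_join C (f x) (f y)) \<and>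
     (\<forall>x\<in>ba_carrier A. f (ba_neg A x) = ba_neg C (f x) \<and> f (ba_J2 A x) = ba_J2 C (f x)) \<and>
     f (ba_zero A) = ba_zero C \<and> f (ba_one A) = ba_one C"

definition balg_iso :: "'a balg \<Rightarrow> 'c balg \<Rightarrow> ('a \<Rightarrow> 'c) \<Rightarrow> bool" where
  "balg_iso A C f \<longleftrightarrow> balg_hom A C f \<and>
     (\<exists>g. balg_hom C A g \<and> (\<forall>x\<in>ba_carrier A. g (f x) = x) \<and> (\<forall>y\<in>ba_carrier C. f (g y) = y))"

record 'b bsys =
  bs_carrier :: "'b set"
  bs_meet :: "'b \<Rightarrow> 'b \<Rightarrow> 'b"
  bs_join :: "'b \<Rightarrow> 'b \<Rightarrow> 'b"
  bs_neg :: "'b \<Rightarrow> 'b"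
  bs_zero :: "'b"
  bs_one :: "'b"
  bs_I :: "'b set"

definition boolean_alg :: "'b bsys \<Rightarrow> bool" where
  "boolean_alg S \<longleftrightarrow>
     (let C = bs_carrier S; m = bs_meet S; j = bs_join S; n = bs_neg S in
     (\<forall>x\<in>C. \<forall>y\<in>C. m x y \<in> C \<and> j x y \<in> C) \<and> (\<forall>x\<in>C. n x \<in> C) \<and>
     bs_zero S \<in> C \<and> bs_one S \<in> C \<and>
     (\<forall>x\<in>C. \<forall>y\<in>C. m x y = m y x \<and> j x y = j y x) \<and>
     (\<forall>x\<in>C. \<forall>y\<in>C. \<forall>z\<in>C. m x (m y z) = m (m x y) z \<and> j x (j y z) = j (j x y) z) \<and>
     (\<forall>x\<in>C. \<forall>y\<in>C. m x (j x y) = x \<and> j x (m x y) = x) \<and>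
     (\<forall>x\<in>C. \<forall>y\<in>C. \<forall>z\<in>C. m x (j y z) = j (m x y) (m x z)) \<and>
     (\<forall>x\<in>C. m x (n x) = bs_zero S \<and> j x (n x) = bs_one S))"

definition bochvar_sys :: "'b bsys \<Rightarrow> bool" where
  "bochvar_sys S \<longleftrightarrow> boolean_alg S \<and> bs_I S \<subseteq> bs_carrier S \<and> bs_one S \<in> bs_I S \<and>
     (\<forall>i\<in>bs_I S. \<forall>j\<in>bs_I S. bs_meet S i j \<in> bs_I S)"

definition bsys_hom :: "'b bsys \<Rightarrow> 'd bsys \<Rightarrow> ('b \<Rightarrow> 'd) \<Rightarrow> bool" where
  "bsys_hom S T g \<longleftrightarrow>
     (\<forall>x\<in>bs_carrier S. g x \<in> bs_carrier T) \<and>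
     (\<forall>x\<in>bs_carrier S. \<forall>y\<in>bs_carrier S.
        g (bs_meet S x y) = bs_meet T (g x) (g y) \<and> g (bs_join S x y) = bs_join T (g x) (g y)) \<and>
     (\<forall>x\<in>bs_carrier S. g (bs_neg S x) = bs_neg T (g x)) \<and>
     g (bs_zero S) = bs_zero T \<and> g (bs_one S) = bs_one T \<and>
     g ` bs_I S \<subseteq> bs_I T"

definition bsys_iso :: "'b bsys \<Rightarrow> 'd bsys \<Rightarrow> ('b \<Rightarrow> 'd) \<Rightarrow> bool" where
  "bsys_iso S T g \<longleftrightarrow> bsys_hom S T g \<and>
     (\<exists>h. bsys_hom T S h \<and> (\<forall>x\<in>bs_carrier S. h (g x) = x) \<and> (\<forall>y\<in>bs_carrier T. g (h y) = y))"

definition same_fibre :: "'a balg \<Rightarrow> 'a \<Rightarrow> 'a \<Rightarrow> bool" where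
  "same_fibre A a b \<longleftrightarrow>
     ba_meet A a (ba_join A a b) = a \<and> ba_meet A b (ba_join A b a) = b"

definition fibre :: "'a balg \<Rightarrow> 'a \<Rightarrow> 'a set" where
  "fibre A a = {b \<in> ba_carrier A. same_fibre A a b}"

definition bottom_fibre :: "'a balg \<Rightarrow> 'a set" where
  "bottom_fibre A = fibre A (ba_zero A)"

definition fibre_top :: "'a balg \<Rightarrow> 'a \<Rightarrow> 'a" where
  "fibre_top A a = (THE t. t \<in> fibre A a \<and> (\<forall>b\<in>fibre A a. ba_meet A b t = b))"

definition Gamma :: "'a balg \<Rightarrow> 'a bsys" where
  "Gamma A = \<lparr> bs_carrier = bottom_fibre A, bs_meet = ba_meet A, bs_join = ba_join A,
     bs_neg = ba_neg A, bs_zero = ba_zero A, bs_one = ba_one A,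
     bs_I = {ba_J2 A (fibre_top A a) | a. a \<in> ba_carrier A} \<rparr>"

definition Gamma_mor :: "'a balg \<Rightarrow> ('a \<Rightarrow> 'c) \<Rightarrow> 'a \<Rightarrow> 'c" where
  "Gamma_mor A f = (\<lambda>x. if x \<in> bottom_fibre A then f x else undefined)"

definition pfilter :: "'b bsys \<Rightarrow> 'b \<Rightarrow> 'b set" where
  "pfilter S i = {x \<in> bs_carrier S. bs_meet S i x = i}"

definition filter_cong :: "'b bsys \<Rightarrow> 'b set \<Rightarrow> ('b \<times> 'b) set" where
  "filter_cong S F = {(a, b). a \<in> bs_carrier S \<and> b \<in> bs_carrier S \<and>
                              (\<exists>f\<in>F. bs_meet S a f = bs_meet S b f)}"

definition cls :: "'b bsys \<Rightarrow> 'b \<Rightarrow> 'b \<Rightarrow> 'b set" where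
  "cls S i a = {b. (a, b) \<in> filter_cong S (pfilter S i)}"

definition rep :: "'b set \<Rightarrow> 'b" where
  "rep x = (SOME a. a \<in> x)"

text \<open>Elements of the Plonka sum are pairs (i, a/[i)) with i in I (tagging makes the
  fibres disjoint). The index join (dual order) is the Boolean meet; the transition map
  p_ij sends a/[i) to a/[j).\<close>
definition Xi :: "'b bsys \<Rightarrow> ('b \<times> 'b set) balg" where
  "Xi S = \<lparr> ba_carrier = {(i, cls S i a) | i a. i \<in> bs_I S \<and> a \<in> bs_carrier S},
     ba_meet = (\<lambda>(i, x) (j, y). let k = bs_meet S i j in
                  (k, cls S k (bs_meet S (rep (cls S k (rep x))) (rep (cls S k (rep y)))))),
     ba_join = (\<lambda>(i, x) (j, y). let k = bs_meet S i j in
                  (k, cls S k (bs_join S (rep (cls S k (rep x))) (rep (cls S k (rep y)))))),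
     ba_neg = (\<lambda>(i, x). (i, cls S i (bs_neg S (rep x)))),
     ba_J2 = (\<lambda>(i, x). (bs_one S, cls S (bs_one S)
                 (THE c. c \<in> bs_carrier S \<and> bs_meet S c i = c \<and>
                         (c, rep x) \<in> filter_cong S (pfilter S i)))),
     ba_zero = (bs_one S, cls S (bs_one S) (bs_zero S)),
     ba_one = (bs_one S, cls S (bs_one S) (bs_one S)) \<rparr>"

definition Xi_mor :: "'d bsys \<Rightarrow> ('b \<Rightarrow> 'd) \<Rightarrow> ('b \<times> 'b set) \<Rightarrow> ('d \<times> 'd set)" where
  "Xi_mor T g = (\<lambda>(i, x). (g i, cls T (g i) (g (rep x))))"

definition unit_square ::
  "('a \<Rightarrow> 'a \<times> 'a set) \<Rightarrow> ('c \<Rightarrow> 'c \<times> 'c set) \<Rightarrow> 'a balg \<Rightarrow> 'c balg \<Rightarrow> ('a \<Rightarrow> 'c) \<Rightarrow> bool" where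
  "unit_square etaA etaC A C f \<longleftrightarrow>
     (\<forall>x\<in>ba_carrier A. Xi_mor (Gamma C) (Gamma_mor A f) (etaA x) = etaC (f x))"

definition counit_square ::
  "('b \<times> 'b set \<Rightarrow> 'b) \<Rightarrow> ('d \<times> 'd set \<Rightarrow> 'd) \<Rightarrow> 'b bsys \<Rightarrow> 'd bsys \<Rightarrow> ('b \<Rightarrow> 'd) \<Rightarrow> bool" where
  "counit_square epsS epsT S T g \<longleftrightarrow>
     (\<forall>p\<in>bs_carrier (Gamma (Xi S)). g (epsS p) = epsT (Gamma_mor (Xi S) (Xi_mor T g) p))"

end

theory Submission
  imports Defs
begin

(* Both categories are handled by pointwise reasoning. By Stone's theorem the homomorphisms of a
   Boolean algebra B into the two-element algebra separate points, and by definition the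
   homomorphisms of a Bochvar algebra into WK^e separate points; so every equation to be checked
   reduces to a finite case analysis. A Boolean homomorphism h of B induces the homomorphism of
   Xi(B, I) into WK^e sending a/[i) to 1/2 if h i is false and to h a otherwise; these separate
   points, so Xi(B, I) is a Bochvar algebra. Conversely, in a Bochvar algebra A the fibre of x is
   indexed by J2(x \<or> \<not>x), and x is recovered from this index together with J2 x modulo it; this
   gives the unit A \<cong> Xi(Gamma A). The bottom fibre of Xi(B, I) consists of the classes a/[1) = {a},
   which gives the counit Gamma(Xi(B, I)) \<cong> (B, I). *)

section \<open>Boolean algebras and Stone separation\<close>

definition bool_homs :: "'b bsys \<Rightarrow> ('b \<Rightarrow> bool) set" where
  "bool_homs S = {h. (\<forall>x\<in>bs_carrier S. \<forall>y\<in>bs_carrier S.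
      h (bs_meet S x y) = (h x \<and> h y) \<and> h (bs_join S x y) = (h x \<or> h y)) \<and>
      (\<forall>x\<in>bs_carrier S. h (bs_neg S x) = (\<not> h x)) \<and>
      \<not> h (bs_zero S) \<and> h (bs_one S)}"

lemma bool_homs_comp: "bsys_hom S T g \<Longrightarrow> h \<in> bool_homs T \<Longrightarrow> h \<circ> g \<in> bool_homs S"
  unfolding bsys_hom_def bool_homs_def by auto

locale bool_alg =
  fixes S :: "'b bsys"
  assumes boolean: "boolean_alg S"
begin

abbreviation "B \<equiv> bs_carrier S"
abbreviation "meet \<equiv> bs_meet S"
abbreviation "join \<equiv> bs_join S"
abbreviation "neg \<equiv> bs_neg S"
abbreviation "zero \<equiv> bs_zero S"
abbreviation "one \<equiv> bs_one S"

lemma meet_closed [simp]: "x \<in> B \<Longrightarrow> y \<in> B \<Longrightarrow> meet x y \<in> B"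
  and join_closed [simp]: "x \<in> B \<Longrightarrow> y \<in> B \<Longrightarrow> join x y \<in> B"
  and neg_closed [simp]: "x \<in> B \<Longrightarrow> neg x \<in> B"
  and zero_closed [simp]: "zero \<in> B"
  and one_closed [simp]: "one \<in> B"
  and meet_comm: "x \<in> B \<Longrightarrow> y \<in> B \<Longrightarrow> meet x y = meet y x"
  and join_comm: "x \<in> B \<Longrightarrow> y \<in> B \<Longrightarrow> join x y = join y x"
  and meet_assoc: "x \<in> B \<Longrightarrow> y \<in> B \<Longrightarrow> w \<in> B \<Longrightarrow> meet x (meet y w) = meet (meet x y) w"
  and meet_absorb: "x \<in> B \<Longrightarrow> y \<in> B \<Longrightarrow> meet x (join x y) = x"
  and join_absorb: "x \<in> B \<Longrightarrow> y \<in> B \<Longrightarrow> join x (meet x y) = x"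
  and meet_join_distrib: "x \<in> B \<Longrightarrow> y \<in> B \<Longrightarrow> w \<in> B \<Longrightarrow> meet x (join y w) = join (meet x y) (meet x w)"
  and meet_neg: "x \<in> B \<Longrightarrow> meet x (neg x) = zero"
  and join_neg: "x \<in> B \<Longrightarrow> join x (neg x) = one"
  using boolean unfolding boolean_alg_def Let_def by blast+

lemma meet_idem: "x \<in> B \<Longrightarrow> meet x x = x"
  by (metis meet_absorb join_absorb meet_closed)

lemma meet_one: "x \<in> B \<Longrightarrow> meet x one = x"
  by (metis meet_absorb neg_closed join_neg)

lemma meet_zero: "x \<in> B \<Longrightarrow> meet x zero = zero"
  by (metis meet_assoc neg_closed meet_neg meet_idem)

lemma join_zero: "x \<in> B \<Longrightarrow> join x zero = x"
  by (metis join_absorb neg_closed meet_neg)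

lemma zero_join: "x \<in> B \<Longrightarrow> join zero x = x"
  by (metis join_comm zero_closed join_zero)

lemma bool_hom_simps:
  assumes "h \<in> bool_homs S"
  shows "x \<in> B \<Longrightarrow> y \<in> B \<Longrightarrow> h (meet x y) = (h x \<and> h y)"
    and "x \<in> B \<Longrightarrow> y \<in> B \<Longrightarrow> h (join x y) = (h x \<or> h y)"
    and "x \<in> B \<Longrightarrow> h (neg x) = (\<not> h x)"
    and "h zero = False" and "h one = True"
  using assms unfolding bool_homs_def by auto

definition proper_filter :: "'b set \<Rightarrow> bool" where
  "proper_filter F \<longleftrightarrow> F \<subseteq> B \<and> one \<in> F \<and> zero \<notin> F \<and> (\<forall>x\<in>F. \<forall>y\<in>F. meet x y \<in> F) \<and>
     (\<forall>x\<in>F. \<forall>y\<in>B. meet x y = x \<longrightarrow> y \<in> F)"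

definition maximal_filter :: "'b set \<Rightarrow> bool" where
  "maximal_filter M \<longleftrightarrow> proper_filter M \<and> (\<forall>F. proper_filter F \<longrightarrow> M \<subseteq> F \<longrightarrow> F = M)"

lemma principal_filter_proper:
  assumes "c \<in> B" "c \<noteq> zero"
  shows "proper_filter {y \<in> B. meet c y = c}"
proof -
  have "meet c (meet x y) = c" if "meet c x = c" "meet c y = c" "x \<in> B" "y \<in> B" for x y
    using that assms by (metis meet_assoc)
  moreover have "meet c y = c" if "meet c x = c" "meet x y = x" "x \<in> B" "y \<in> B" for x y
    using that assms by (metis meet_assoc)
  ultimately show ?thesis
    using assms unfolding proper_filter_def by (auto simp: meet_one meet_zero)
qed

lemma chain_Union_proper_filter:
  assumes "\<F> \<in> chains {F. proper_filter F}" "\<F> \<noteq> {}"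
  shows "proper_filter (\<Union>\<F>)"
proof -
  have filters: "\<And>F. F \<in> \<F> \<Longrightarrow> proper_filter F" and chain: "\<forall>F\<in>\<F>. \<forall>G\<in>\<F>. F \<subseteq> G \<or> G \<subseteq> F"
    using assms(1) unfolding chains_def chain_subset_def by auto
  have "meet x y \<in> \<Union>\<F>" if "x \<in> F" "y \<in> G" "F \<in> \<F>" "G \<in> \<F>" for x y F G
  proof -
    have "x \<in> F \<and> y \<in> F \<and> F \<in> \<F> \<or> x \<in> G \<and> y \<in> G \<and> G \<in> \<F>" using chain that by blast
    then show ?thesis using filters unfolding proper_filter_def by blast
  qed
  moreover have "one \<in> \<Union>\<F>" using assms(2) filters unfolding proper_filter_def by blast
  moreover have "\<Union>\<F> \<subseteq> B" "zero \<notin> \<Union>\<F>" "\<forall>x\<in>\<Union>\<F>. \<forall>y\<in>B. meet x y = x \<longrightarrow> y \<in> \<Union>\<F>"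
    using filters unfolding proper_filter_def by blast+
  ultimately show ?thesis unfolding proper_filter_def by blast
qed

lemma maximal_filter_exists:
  assumes "c \<in> B" "c \<noteq> zero"
  shows "\<exists>M. maximal_filter M \<and> c \<in> M"
proof -
  have "\<exists>M\<in>{F. proper_filter F \<and> c \<in> F}. \<forall>F\<in>{F. proper_filter F \<and> c \<in> F}. M \<subseteq> F \<longrightarrow> F = M"
  proof (rule Zorn_Lemma2, intro ballI)
    fix \<F> assume \<F>: "\<F> \<in> chains {F. proper_filter F \<and> c \<in> F}"
    show "\<exists>U\<in>{F. proper_filter F \<and> c \<in> F}. \<forall>F\<in>\<F>. F \<subseteq> U"
    proof (cases "\<F> = {}")
      case True
      then show ?thesis using principal_filter_proper[OF assms] assms by (auto simp: meet_idem)
    next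
      case False
      have "\<F> \<in> chains {F. proper_filter F}" using \<F> unfolding chains_def chain_subset_def by blast
      then have "proper_filter (\<Union>\<F>)" using False by (rule chain_Union_proper_filter)
      moreover have "c \<in> \<Union>\<F>" using \<F> False unfolding chains_def by blast
      ultimately show ?thesis by blast
    qed
  qed
  then show ?thesis unfolding maximal_filter_def by blast
qed

lemma filter_extension_proper:
  assumes M: "proper_filter M" and x: "x \<in> B" and disjoint: "\<And>u. u \<in> M \<Longrightarrow> meet u x \<noteq> zero"
  shows "proper_filter {y \<in> B. \<exists>u\<in>M. meet (meet u x) y = meet u x}"
    (is "proper_filter ?G")
proof -
  have MB: "M \<subseteq> B" and M_meet: "\<And>u v. u \<in> M \<Longrightarrow> v \<in> M \<Longrightarrow> meet u v \<in> M" and one: "one \<in> M"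
    using M unfolding proper_filter_def by auto
  have shrink: "meet (meet (meet u v) x) y = meet (meet u v) x"
    if "meet (meet u x) y = meet u x" "u \<in> B" "v \<in> B" "y \<in> B" for u v y
  proof -
    have "meet (meet (meet u v) x) y = meet v (meet (meet u x) y)"
      using that x by (metis meet_assoc meet_comm meet_closed)
    also have "\<dots> = meet (meet u v) x"
      using that x by (metis meet_assoc meet_comm meet_closed)
    finally show ?thesis .
  qed
  have "meet y1 y2 \<in> ?G" if y: "y1 \<in> ?G" "y2 \<in> ?G" for y1 y2
  proof -
    obtain u1 u2 where u: "u1 \<in> M" "u2 \<in> M" "y1 \<in> B" "y2 \<in> B"
      "meet (meet u1 x) y1 = meet u1 x" "meet (meet u2 x) y2 = meet u2 x"
      using y by blast
    have u12: "u1 \<in> B" "u2 \<in> B" using u MB by auto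
    have "meet (meet (meet u1 u2) x) y1 = meet (meet u1 u2) x"
      using shrink u u12 by blast
    moreover have "meet (meet (meet u1 u2) x) y2 = meet (meet u1 u2) x"
      using shrink[of u2 y2 u1] u u12 x by (simp add: meet_comm)
    ultimately have "meet (meet (meet u1 u2) x) (meet y1 y2) = meet (meet u1 u2) x"
      using u u12 x by (metis meet_assoc meet_closed)
    then show ?thesis using u M_meet by auto
  qed
  moreover have "y \<in> ?G" if y: "y1 \<in> ?G" "y \<in> B" "meet y1 y = y1" for y1 y
  proof -
    obtain u where u: "u \<in> M" "y1 \<in> B" "meet (meet u x) y1 = meet u x" using y by blast
    then have "meet (meet u x) y = meet u x"
      using y MB x by (metis meet_assoc meet_closed subsetD)
    then show ?thesis using u y by auto
  qed
  moreover have "zero \<notin> ?G" using disjoint MB x by clarsimp (metis meet_closed meet_zero subsetD)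
  moreover have "one \<in> ?G" using one x by (auto simp: meet_one intro!: bexI[of _ one])
  ultimately show ?thesis unfolding proper_filter_def by blast
qed

lemma maximal_filter_neg:
  assumes M: "maximal_filter M" and x: "x \<in> B" "x \<notin> M"
  shows "neg x \<in> M"
proof (rule ccontr)
  assume nx: "neg x \<notin> M"
  have MB: "M \<subseteq> B" and M_up: "\<And>u y. u \<in> M \<Longrightarrow> y \<in> B \<Longrightarrow> meet u y = u \<Longrightarrow> y \<in> M"
    and one: "one \<in> M"
    using M unfolding maximal_filter_def proper_filter_def by auto
  have "meet u x \<noteq> zero" if u: "u \<in> M" for u
  proof
    assume "meet u x = zero"
    then have "meet u (neg x) = u" using u MB x
      by (metis meet_closed neg_closed join_neg meet_join_distrib meet_one zero_join subsetD)
    then show False using M_up u x nx by auto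
  qed
  then \<comment> \<open>the filter generated by M and x\<close>
  have "proper_filter {y \<in> B. \<exists>u\<in>M. meet (meet u x) y = meet u x}" (is "proper_filter ?G")
    using M x unfolding maximal_filter_def by (intro filter_extension_proper) auto
  moreover have "M \<subseteq> ?G"
  proof
    fix y assume "y \<in> M"
    moreover have "meet (meet y x) y = meet y x" if "y \<in> B" for y
      using that x by (metis meet_assoc meet_comm meet_idem)
    ultimately show "y \<in> ?G" using MB by blast
  qed
  ultimately have "?G = M" using M unfolding maximal_filter_def by blast
  moreover have "meet (meet one x) x = meet one x" using x by (metis meet_comm meet_one meet_idem one_closed)
  ultimately show False using one x by blast
qed

lemma maximal_filter_bool_hom:
  assumes M: "maximal_filter M"
  shows "(\<lambda>x. x \<in> M) \<in> bool_homs S"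
proof -
  have MB: "M \<subseteq> B" and zero: "zero \<notin> M" and one: "one \<in> M"
    and M_meet: "\<And>u v. u \<in> M \<Longrightarrow> v \<in> M \<Longrightarrow> meet u v \<in> M"
    and M_up: "\<And>u y. u \<in> M \<Longrightarrow> y \<in> B \<Longrightarrow> meet u y = u \<Longrightarrow> y \<in> M"
    using M unfolding maximal_filter_def proper_filter_def by auto
  have neg: "neg x \<in> M \<longleftrightarrow> x \<notin> M" if "x \<in> B" for x
    using maximal_filter_neg[OF M that] M_meet[of x "neg x"] meet_neg[OF that] zero by auto
  have meet: "meet x y \<in> M \<longleftrightarrow> x \<in> M \<and> y \<in> M" if "x \<in> B" "y \<in> B" for x y
  proof -
    have "meet (meet x y) x = meet x y" "meet (meet x y) y = meet x y"
      using that by (metis meet_assoc meet_comm meet_idem)+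
    then show ?thesis using M_meet M_up that by auto
  qed
  have join: "join x y \<in> M \<longleftrightarrow> x \<in> M \<or> y \<in> M" if "x \<in> B" "y \<in> B" for x y
  proof
    assume "join x y \<in> M"
    show "x \<in> M \<or> y \<in> M"
    proof (rule ccontr)
      assume "\<not> (x \<in> M \<or> y \<in> M)"
      then have "meet (join x y) (meet (neg x) (neg y)) \<in> M"
        using neg meet that \<open>join x y \<in> M\<close> by simp
      moreover have "meet (join x y) (meet (neg x) (neg y)) = zero"
      proof -
        have "meet (join x y) (meet (neg x) (neg y))
            = join (meet (meet (neg x) (neg y)) x) (meet (meet (neg x) (neg y)) y)"
          using that by (metis meet_closed neg_closed join_closed meet_comm meet_join_distrib)
        also have "meet (meet (neg x) (neg y)) x = zero" using that
          by (metis meet_assoc neg_closed meet_comm meet_neg meet_zero)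
        also have "meet (meet (neg x) (neg y)) y = zero" using that
          by (metis meet_assoc neg_closed meet_comm meet_neg meet_zero)
        finally show ?thesis by (simp add: join_zero)
      qed
      ultimately show False using zero by simp
    qed
  next
    assume "x \<in> M \<or> y \<in> M"
    then show "join x y \<in> M" using M_up that by (metis meet_absorb join_comm join_closed)
  qed
  show ?thesis unfolding bool_homs_def using neg meet join zero one by simp
qed

lemma bool_hom_exists:
  assumes "c \<in> B" "c \<noteq> zero"
  shows "\<exists>h\<in>bool_homs S. h c"
proof -
  obtain M where "maximal_filter M" "c \<in> M" using maximal_filter_exists[OF assms] by blast
  then show ?thesis using maximal_filter_bool_hom by fastforce
qed

lemma eq_if_meet_neg_zero:
  assumes a: "a \<in> B" and b: "b \<in> B" and "meet a (neg b) = zero" "meet b (neg a) = zero"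
  shows "a = b"
proof -
  have "a = meet a b" "b = meet b a" using assms
    by (metis meet_closed neg_closed join_neg meet_join_distrib join_zero meet_one)+
  then show ?thesis using a b meet_comm by metis
qed

lemma bool_homs_separate:
  assumes a: "a \<in> B" and b: "b \<in> B" and agree: "\<And>h. h \<in> bool_homs S \<Longrightarrow> h a = h b"
  shows "a = b"
proof (rule ccontr)
  assume "a \<noteq> b"
  then have "meet a (neg b) \<noteq> zero \<or> meet b (neg a) \<noteq> zero"
    using eq_if_meet_neg_zero a b by blast
  then obtain h where "h \<in> bool_homs S" "h (meet a (neg b)) \<or> h (meet b (neg a))"
    using bool_hom_exists a b by (meson meet_closed neg_closed)
  then show False using agree a b by (auto simp: bool_hom_simps)
qed

lemma mem_cls:
  assumes "i \<in> B" "a \<in> B"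
  shows "b \<in> cls S i a \<longleftrightarrow> b \<in> B \<and> (\<forall>h\<in>bool_homs S. h i \<longrightarrow> h a = h b)"
proof
  assume "b \<in> cls S i a"
  then obtain f where f: "b \<in> B" "f \<in> B" "meet i f = i" "meet a f = meet b f"
    unfolding cls_def filter_cong_def pfilter_def by auto
  have "h a = h b" if h: "h \<in> bool_homs S" "h i" for h
    using bool_hom_simps(1)[OF h(1), of i f] bool_hom_simps(1)[OF h(1), of a f]
      bool_hom_simps(1)[OF h(1), of b f] f h(2) assms by auto
  then show "b \<in> B \<and> (\<forall>h\<in>bool_homs S. h i \<longrightarrow> h a = h b)" using f by auto
next
  assume b: "b \<in> B \<and> (\<forall>h\<in>bool_homs S. h i \<longrightarrow> h a = h b)"
  have "meet a i = meet b i"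
    by (rule bool_homs_separate) (use b assms in \<open>auto simp: bool_hom_simps\<close>)
  moreover have "i \<in> pfilter S i" unfolding pfilter_def using assms meet_idem by auto
  ultimately show "b \<in> cls S i a"
    unfolding cls_def filter_cong_def using assms b by auto
qed

lemma cls_self: "i \<in> B \<Longrightarrow> a \<in> B \<Longrightarrow> a \<in> cls S i a"
  by (simp add: mem_cls)

lemma rep_cls:
  assumes "i \<in> B" "a \<in> B"
  shows "rep (cls S i a) \<in> B" and "\<And>h. h \<in> bool_homs S \<Longrightarrow> h i \<Longrightarrow> h (rep (cls S i a)) = h a"
proof -
  have "rep (cls S i a) \<in> cls S i a"
    unfolding rep_def by (rule someI) (rule cls_self[OF assms])
  then show "rep (cls S i a) \<in> B" and "\<And>h. h \<in> bool_homs S \<Longrightarrow> h i \<Longrightarrow> h (rep (cls S i a)) = h a"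
    using mem_cls[OF assms] by auto
qed

lemma rep_cls_rep_cls:
  assumes "i \<in> B" "k \<in> B" "a \<in> B" "h \<in> bool_homs S" "h i" "h k"
  shows "h (rep (cls S k (rep (cls S i a)))) = h a"
  using assms rep_cls(1)[of i a] rep_cls(2)[of i a h] rep_cls(2)[of k "rep (cls S i a)" h] by simp

lemma cls_eq_iff:
  assumes "i \<in> B" "a \<in> B" "b \<in> B"
  shows "cls S i a = cls S i b \<longleftrightarrow> (\<forall>h\<in>bool_homs S. h i \<longrightarrow> h a = h b)"
proof
  assume "cls S i a = cls S i b"
  then have "b \<in> cls S i a" using cls_self assms by auto
  then show "\<forall>h\<in>bool_homs S. h i \<longrightarrow> h a = h b" using mem_cls assms by auto
next
  assume agree: "\<forall>h\<in>bool_homs S. h i \<longrightarrow> h a = h b"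
  show "cls S i a = cls S i b"
  proof (rule set_eqI)
    fix x show "x \<in> cls S i a \<longleftrightarrow> x \<in> cls S i b"
      unfolding mem_cls[OF assms(1,2)] mem_cls[OF assms(1,3)] using agree by blast
  qed
qed

lemma cls_eqI:
  "i \<in> B \<Longrightarrow> a \<in> B \<Longrightarrow> b \<in> B \<Longrightarrow> (\<And>h. h \<in> bool_homs S \<Longrightarrow> h i \<Longrightarrow> h a = h b) \<Longrightarrow>
    cls S i a = cls S i b"
  using cls_eq_iff by auto

lemma cls_eq_iff_meet:
  assumes "i \<in> B" "a \<in> B" "b \<in> B"
  shows "cls S i a = cls S i b \<longleftrightarrow> meet a i = meet b i"
proof
  assume "cls S i a = cls S i b"
  then have agree: "\<forall>h\<in>bool_homs S. h i \<longrightarrow> h a = h b" using cls_eq_iff assms by auto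
  show "meet a i = meet b i"
    by (rule bool_homs_separate) (use assms agree in \<open>auto simp: bool_hom_simps\<close>)
next
  assume eq: "meet a i = meet b i"
  show "cls S i a = cls S i b"
  proof (rule cls_eqI[OF assms])
    fix h assume "h \<in> bool_homs S" "h i"
    then show "h a = h b" using eq bool_hom_simps(1)[of h a i] bool_hom_simps(1)[of h b i] assms by auto
  qed
qed

lemma cls_one:
  assumes "a \<in> B" shows "cls S one a = {a}"
proof -
  have "b = a" if "b \<in> cls S one a" for b
  proof -
    have "b \<in> B" "\<forall>h\<in>bool_homs S. h a = h b"
      using that mem_cls[of one a b] assms by (auto simp: bool_hom_simps)
    then show "b = a" using bool_homs_separate[of b a] assms by auto
  qed
  then show ?thesis using cls_self assms by auto
qed

lemma rep_singleton: "rep {a} = a"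
  unfolding rep_def by auto

lemma J2_witness:
  assumes "i \<in> B" "a \<in> B"
  shows "(THE c. c \<in> B \<and> meet c i = c \<and> (c, a) \<in> filter_cong S (pfilter S i)) = meet a i"
proof (rule the_equality)
  have cong_iff: "(c, a) \<in> filter_cong S (pfilter S i) \<longleftrightarrow> c \<in> B \<and> (\<forall>h\<in>bool_homs S. h i \<longrightarrow> h c = h a)"
    if "c \<in> B" for c
    using mem_cls[OF assms(1) that, of a] assms that by (simp add: cls_def)
  show "meet a i \<in> B \<and> meet (meet a i) i = meet a i \<and> (meet a i, a) \<in> filter_cong S (pfilter S i)"
    using assms cong_iff[of "meet a i"] by (auto simp: bool_hom_simps) (metis meet_assoc meet_idem)
  fix c assume c: "c \<in> B \<and> meet c i = c \<and> (c, a) \<in> filter_cong S (pfilter S i)"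
  then have agree: "\<forall>h\<in>bool_homs S. h i \<longrightarrow> h c = h a" using cong_iff by auto
  show "c = meet a i"
  proof (rule bool_homs_separate)
    fix h assume h: "h \<in> bool_homs S"
    have "h c = h (meet c i)" using c by simp
    also have "\<dots> = (h c \<and> h i)" using h c assms bool_hom_simps(1)[of h c i] by blast
    finally have "h c = (h c \<and> h i)" .
    then show "h c = h (meet a i)" using agree h assms c by (auto simp: bool_hom_simps)
  qed (use c assms in auto)
qed

end

section \<open>Homomorphisms into WK^e\<close>

text \<open>Stated by cases so that \<open>split: wk.splits\<close> decides identities of WK^e; with separation by
  homomorphisms this reduces every equation in a Bochvar algebra to such an identity.\<close>
lemma wk_ops_case:
  "wk_meet x y = (case x of WZero \<Rightarrow> (case y of WHalf \<Rightarrow> WHalf | _ \<Rightarrow> WZero) | WHalf \<Rightarrow> WHalf | WOne \<Rightarrow> y)"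
  "wk_join x y = (case x of WZero \<Rightarrow> y | WHalf \<Rightarrow> WHalf | WOne \<Rightarrow> (case y of WHalf \<Rightarrow> WHalf | _ \<Rightarrow> WOne))"
  "wk_neg x = (case x of WZero \<Rightarrow> WOne | WHalf \<Rightarrow> WHalf | WOne \<Rightarrow> WZero)"
  "wk_J2 x = (case x of WOne \<Rightarrow> WOne | _ \<Rightarrow> WZero)"
  by (cases x; cases y; simp add: wk_meet_def wk_join_def wk_J2_def)+

definition wk_homs :: "'a balg \<Rightarrow> ('a \<Rightarrow> wk) set" where
  "wk_homs A = {h. (\<forall>x\<in>ba_carrier A. \<forall>y\<in>ba_carrier A.
      h (ba_meet A x y) = wk_meet (h x) (h y) \<and> h (ba_join A x y) = wk_join (h x) (h y)) \<and>
      (\<forall>x\<in>ba_carrier A. h (ba_neg A x) = wk_neg (h x) \<and> h (ba_J2 A x) = wk_J2 (h x)) \<and>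
      h (ba_zero A) = WZero \<and> h (ba_one A) = WOne}"

lemma bochvar_algI:
  assumes "balg_wf A" and "H \<subseteq> wk_homs A"
    and "\<And>x y. x \<in> ba_carrier A \<Longrightarrow> y \<in> ba_carrier A \<Longrightarrow> (\<And>h. h \<in> H \<Longrightarrow> h x = h y) \<Longrightarrow> x = y"
  shows "bochvar_alg A"
proof -
  have "\<forall>x\<in>ba_carrier A. \<forall>y\<in>ba_carrier A. (\<forall>h\<in>H. h x = h y) \<longrightarrow> x = y"
    using assms(3) by blast
  then show ?thesis
    using assms(1,2) unfolding bochvar_alg_def wk_homs_def
    by (intro conjI exI[of _ H] exI[of _ "\<lambda>x h. h x"]) auto
qed

lemma bochvar_alg_wk_homs_separate:
  assumes A: "bochvar_alg A" and xy: "x \<in> ba_carrier A" "y \<in> ba_carrier A"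
    and agree: "\<And>h. h \<in> wk_homs A \<Longrightarrow> h x = h y"
  shows "x = y"
proof -
  obtain X :: "('a \<Rightarrow> wk) set" and e where inj:
    "\<forall>x\<in>ba_carrier A. \<forall>y\<in>ba_carrier A. (\<forall>i\<in>X. e x i = e y i) \<longrightarrow> x = y"
    and coords: "\<And>i. i \<in> X \<Longrightarrow> (\<lambda>x. e x i) \<in> wk_homs A"
    using A unfolding bochvar_alg_def wk_homs_def by auto
  show ?thesis using inj xy agree[OF coords] by blast
qed

locale bochvar_system = bool_alg S for S :: "'b bsys" +
  assumes I_subset: "bs_I S \<subseteq> bs_carrier S"
    and one_in_I: "bs_one S \<in> bs_I S"
    and I_meet_closed: "i \<in> bs_I S \<Longrightarrow> k \<in> bs_I S \<Longrightarrow> bs_meet S i k \<in> bs_I S"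

lemma bochvar_system_iff: "bochvar_system S \<longleftrightarrow> bochvar_sys S"
  unfolding bochvar_system_def bochvar_system_axioms_def bool_alg_def bochvar_sys_def by blast

context bool_alg
begin

lemma Xi_carrier: "ba_carrier (Xi S) = {(i, cls S i a) | i a. i \<in> bs_I S \<and> a \<in> B}"
  by (simp add: Xi_def)

lemma Xi_meet:
  assumes "i \<in> B" "k \<in> B" "a \<in> B" "b \<in> B"
  shows "ba_meet (Xi S) (i, cls S i a) (k, cls S k b) = (meet i k, cls S (meet i k) (meet a b))"
proof -
  have "cls S (meet i k) (meet (rep (cls S (meet i k) (rep (cls S i a)))) (rep (cls S (meet i k) (rep (cls S k b)))))
      = cls S (meet i k) (meet a b)"
  proof (rule cls_eqI)
    fix h assume h: "h \<in> bool_homs S" "h (meet i k)"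
    then have "h i" "h k" using assms by (simp_all add: bool_hom_simps)
    then show "h (meet (rep (cls S (meet i k) (rep (cls S i a)))) (rep (cls S (meet i k) (rep (cls S k b)))))
        = h (meet a b)"
      using assms h rep_cls rep_cls_rep_cls[of i "meet i k" a h] rep_cls_rep_cls[of k "meet i k" b h]
      by (simp add: bool_hom_simps)
  qed (use assms rep_cls in auto)
  then show ?thesis by (simp add: Xi_def Let_def)
qed

lemma Xi_join:
  assumes "i \<in> B" "k \<in> B" "a \<in> B" "b \<in> B"
  shows "ba_join (Xi S) (i, cls S i a) (k, cls S k b) = (meet i k, cls S (meet i k) (join a b))"
proof -
  have "cls S (meet i k) (join (rep (cls S (meet i k) (rep (cls S i a)))) (rep (cls S (meet i k) (rep (cls S k b)))))
      = cls S (meet i k) (join a b)"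
  proof (rule cls_eqI)
    fix h assume h: "h \<in> bool_homs S" "h (meet i k)"
    then have "h i" "h k" using assms by (simp_all add: bool_hom_simps)
    then show "h (join (rep (cls S (meet i k) (rep (cls S i a)))) (rep (cls S (meet i k) (rep (cls S k b)))))
        = h (join a b)"
      using assms h rep_cls rep_cls_rep_cls[of i "meet i k" a h] rep_cls_rep_cls[of k "meet i k" b h]
      by (simp add: bool_hom_simps)
  qed (use assms rep_cls in auto)
  then show ?thesis by (simp add: Xi_def Let_def)
qed

lemma Xi_neg:
  assumes "i \<in> B" "a \<in> B"
  shows "ba_neg (Xi S) (i, cls S i a) = (i, cls S i (neg a))"
proof -
  have "cls S i (neg (rep (cls S i a))) = cls S i (neg a)"
    by (rule cls_eqI) (use assms rep_cls[of i a] in \<open>auto simp: bool_hom_simps\<close>)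
  then show ?thesis by (simp add: Xi_def)
qed

lemma Xi_J2:
  assumes "i \<in> B" "a \<in> B"
  shows "ba_J2 (Xi S) (i, cls S i a) = (one, cls S one (meet a i))"
proof -
  have "cls S one (meet (rep (cls S i a)) i) = cls S one (meet a i)"
    by (rule cls_eqI) (use assms rep_cls[of i a] in \<open>auto simp: bool_hom_simps\<close>)
  then show ?thesis using assms rep_cls(1)[of i a] by (simp add: Xi_def J2_witness)
qed

lemma Xi_zero: "ba_zero (Xi S) = (one, cls S one zero)"
  and Xi_one: "ba_one (Xi S) = (one, cls S one one)"
  by (simp_all add: Xi_def)

lemmas Xi_ops = Xi_meet Xi_join Xi_neg Xi_J2 Xi_zero Xi_one

end

definition Xi_wk_hom :: "('b \<Rightarrow> bool) \<Rightarrow> 'b \<times> 'b set \<Rightarrow> wk" where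
  "Xi_wk_hom h p = (if h (fst p) then (if h (rep (snd p)) then WOne else WZero) else WHalf)"

lemma (in bool_alg) Xi_wk_hom_cls:
  assumes "i \<in> B" "a \<in> B" "h \<in> bool_homs S"
  shows "Xi_wk_hom h (i, cls S i a) = (if h i then (if h a then WOne else WZero) else WHalf)"
  using assms rep_cls[of i a] unfolding Xi_wk_hom_def by auto

context bochvar_system
begin

lemma Xi_carrierE:
  assumes "p \<in> ba_carrier (Xi S)"
  obtains i a where "p = (i, cls S i a)" "i \<in> bs_I S" "i \<in> B" "a \<in> B"
  using assms I_subset by (auto simp: Xi_carrier)

lemma Xi_carrierI: "i \<in> bs_I S \<Longrightarrow> a \<in> B \<Longrightarrow> (i, cls S i a) \<in> ba_carrier (Xi S)"
  by (auto simp: Xi_carrier)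

lemma Xi_balg_wf: "balg_wf (Xi S)"
  unfolding balg_wf_def
  by (auto elim!: Xi_carrierE intro!: Xi_carrierI simp: Xi_ops one_in_I I_meet_closed)

lemma Xi_wk_hom_in_wk_homs:
  assumes h: "h \<in> bool_homs S"
  shows "Xi_wk_hom h \<in> wk_homs (Xi S)"
  unfolding wk_homs_def using h
  by (auto elim!: Xi_carrierE simp: Xi_ops Xi_wk_hom_cls bool_hom_simps wk_meet_def wk_join_def wk_J2_def
      split: if_splits)

lemma Xi_wk_homs_separate:
  assumes p: "p \<in> ba_carrier (Xi S)" and q: "q \<in> ba_carrier (Xi S)"
    and agree: "\<And>h. h \<in> bool_homs S \<Longrightarrow> Xi_wk_hom h p = Xi_wk_hom h q"
  shows "p = q"
proof -
  obtain i a where p: "p = (i, cls S i a)" "i \<in> B" "a \<in> B" using p by (rule Xi_carrierE)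
  obtain k b where q: "q = (k, cls S k b)" "k \<in> B" "b \<in> B" using q by (rule Xi_carrierE)
  have agree': "(if h i then (if h a then WOne else WZero) else WHalf) =
      (if h k then (if h b then WOne else WZero) else WHalf)" if h: "h \<in> bool_homs S" for h
    using agree[OF h] p q Xi_wk_hom_cls h by simp
  have "i = k"
  proof (rule bool_homs_separate)
    fix h assume "h \<in> bool_homs S"
    from agree'[OF this] show "h i = h k" by (auto split: if_splits)
  qed (use p q in auto)
  moreover have "cls S i a = cls S i b"
  proof (rule cls_eqI)
    fix h assume "h \<in> bool_homs S" "h i"
    with agree'[OF this(1)] show "h a = h b" using \<open>i = k\<close> by (auto split: if_splits)
  qed (use p q in auto)
  ultimately show "p = q" using p q by simp
qed

lemma Xi_bochvar_alg: "bochvar_alg (Xi S)"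
proof (rule bochvar_algI[OF Xi_balg_wf])
  show "Xi_wk_hom ` bool_homs S \<subseteq> wk_homs (Xi S)" using Xi_wk_hom_in_wk_homs by auto
next
  fix p q assume "p \<in> ba_carrier (Xi S)" "q \<in> ba_carrier (Xi S)"
    and "\<And>h. h \<in> Xi_wk_hom ` bool_homs S \<Longrightarrow> h p = h q"
  then show "p = q" by (intro Xi_wk_homs_separate) auto
qed

end

lemma Xi_mor_cls:
  assumes S: "bool_alg S" and T: "bool_alg T" and g: "bsys_hom S T g"
    and ia: "i \<in> bs_carrier S" "a \<in> bs_carrier S"
  shows "Xi_mor T g (i, cls S i a) = (g i, cls T (g i) (g a))"
proof -
  interpret S: bool_alg S by fact
  interpret T: bool_alg T by fact
  have "cls T (g i) (g (rep (cls S i a))) = cls T (g i) (g a)"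
  proof (rule T.cls_eqI)
    fix h assume h: "h \<in> bool_homs T" "h (g i)"
    then show "h (g (rep (cls S i a))) = h (g a)"
      using S.rep_cls(2)[OF ia bool_homs_comp[OF g h(1)]] by simp
  qed (use g ia S.rep_cls in \<open>auto simp: bsys_hom_def\<close>)
  then show ?thesis by (simp add: Xi_mor_def)
qed

lemma Xi_mor_balg_hom:
  assumes S: "bochvar_system S" and T: "bochvar_system T" and g: "bsys_hom S T g"
  shows "balg_hom (Xi S) (Xi T) (Xi_mor T g)"
proof -
  interpret S: bochvar_system S by fact
  interpret T: bochvar_system T by fact
  have cls: "Xi_mor T g (i, cls S i a) = (g i, cls T (g i) (g a))"
    if "i \<in> bs_carrier S" "a \<in> bs_carrier S" for i a
    using Xi_mor_cls[OF S.bool_alg_axioms T.bool_alg_axioms g that] .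
  show ?thesis
    using g unfolding balg_hom_def bsys_hom_def
    by (auto elim!: S.Xi_carrierE simp: cls S.Xi_ops T.Xi_ops intro!: T.Xi_carrierI) blast
qed

lemma Xi_mor_id:
  assumes S: "bochvar_system S" and p: "p \<in> ba_carrier (Xi S)"
  shows "Xi_mor S id p = p"
proof -
  interpret bochvar_system S by fact
  have "bsys_hom S S id" unfolding bsys_hom_def by simp
  then show ?thesis using p by (auto elim!: Xi_carrierE simp: Xi_mor_cls[OF bool_alg_axioms bool_alg_axioms])
qed

lemma Xi_mor_comp:
  assumes S: "bochvar_system S" and T: "bochvar_system T" and U: "bochvar_system U"
    and g: "bsys_hom S T g" and k: "bsys_hom T U k" and p: "p \<in> ba_carrier (Xi S)"
  shows "Xi_mor U (k \<circ> g) p = Xi_mor U k (Xi_mor T g p)"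
proof -
  interpret S: bochvar_system S by fact
  interpret T: bochvar_system T by fact
  interpret U: bochvar_system U by fact
  have kg: "bsys_hom S U (k \<circ> g)" using g k unfolding bsys_hom_def by (auto simp: image_subset_iff)
  have gS: "g x \<in> bs_carrier T" if "x \<in> bs_carrier S" for x using g that unfolding bsys_hom_def by auto
  show ?thesis
    using p gS by (auto elim!: S.Xi_carrierE simp: Xi_mor_cls[OF S.bool_alg_axioms U.bool_alg_axioms kg]
        Xi_mor_cls[OF S.bool_alg_axioms T.bool_alg_axioms g] Xi_mor_cls[OF T.bool_alg_axioms U.bool_alg_axioms k])
qed

section \<open>Fibres of a Bochvar algebra and the functor Gamma\<close>

definition fibre_index :: "'a balg \<Rightarrow> 'a \<Rightarrow> 'a" where
  "fibre_index A x = ba_J2 A (ba_join A x (ba_neg A x))"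

locale bochvar =
  fixes A :: "'a balg"
  assumes bochvar: "bochvar_alg A"
begin

abbreviation "Car \<equiv> ba_carrier A"
abbreviation "mA \<equiv> ba_meet A"
abbreviation "jA \<equiv> ba_join A"
abbreviation "nA \<equiv> ba_neg A"
abbreviation "JA \<equiv> ba_J2 A"
abbreviation "zA \<equiv> ba_zero A"
abbreviation "oA \<equiv> ba_one A"
abbreviation "\<iota> \<equiv> fibre_index A"

lemma balg_wf: "balg_wf A"
  using bochvar unfolding bochvar_alg_def by simp

lemma meet_closed [simp]: "x \<in> Car \<Longrightarrow> y \<in> Car \<Longrightarrow> mA x y \<in> Car"
  and join_closed [simp]: "x \<in> Car \<Longrightarrow> y \<in> Car \<Longrightarrow> jA x y \<in> Car"
  and neg_closed [simp]: "x \<in> Car \<Longrightarrow> nA x \<in> Car"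
  and J2_closed [simp]: "x \<in> Car \<Longrightarrow> JA x \<in> Car"
  and zero_closed [simp]: "zA \<in> Car"
  and one_closed [simp]: "oA \<in> Car"
  using balg_wf unfolding balg_wf_def by auto

lemma fibre_index_closed [simp]: "x \<in> Car \<Longrightarrow> \<iota> x \<in> Car"
  by (simp add: fibre_index_def)

lemma wk_hom_simps:
  assumes "h \<in> wk_homs A"
  shows "x \<in> Car \<Longrightarrow> y \<in> Car \<Longrightarrow> h (mA x y) = wk_meet (h x) (h y)"
    and "x \<in> Car \<Longrightarrow> y \<in> Car \<Longrightarrow> h (jA x y) = wk_join (h x) (h y)"
    and "x \<in> Car \<Longrightarrow> h (nA x) = wk_neg (h x)"
    and "x \<in> Car \<Longrightarrow> h (JA x) = wk_J2 (h x)"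
    and "h zA = WZero" and "h oA = WOne"
    and "x \<in> Car \<Longrightarrow> h (\<iota> x) = (if h x = WHalf then WZero else WOne)"
  using assms unfolding wk_homs_def fibre_index_def
  by (auto simp: wk_ops_case split: wk.splits)

lemma wk_homs_separate:
  "x \<in> Car \<Longrightarrow> y \<in> Car \<Longrightarrow> (\<And>h. h \<in> wk_homs A \<Longrightarrow> h x = h y) \<Longrightarrow> x = y"
  using bochvar_alg_wk_homs_separate[OF bochvar] by blast

lemma same_fibre_iff:
  assumes "a \<in> Car" "b \<in> Car"
  shows "same_fibre A a b \<longleftrightarrow> (\<forall>h\<in>wk_homs A. h a = WHalf \<longleftrightarrow> h b = WHalf)"
proof
  assume sf: "same_fibre A a b"
  show "\<forall>h\<in>wk_homs A. h a = WHalf \<longleftrightarrow> h b = WHalf"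
  proof
    fix h assume h: "h \<in> wk_homs A"
    have "h (mA a (jA a b)) = h a" "h (mA b (jA b a)) = h b"
      using sf unfolding same_fibre_def by auto
    then show "h a = WHalf \<longleftrightarrow> h b = WHalf"
      using assms h by (auto simp: wk_hom_simps wk_ops_case split: wk.splits)
  qed
next
  assume "\<forall>h\<in>wk_homs A. h a = WHalf \<longleftrightarrow> h b = WHalf"
  then have "mA a (jA a b) = a" "mA b (jA b a) = b"
    using assms by (auto intro!: wk_homs_separate simp: wk_hom_simps wk_ops_case split: wk.splits)
  then show "same_fibre A a b" unfolding same_fibre_def by simp
qed

lemma fibre_iff:
  "a \<in> Car \<Longrightarrow> b \<in> fibre A a \<longleftrightarrow> b \<in> Car \<and> (\<forall>h\<in>wk_homs A. h a = WHalf \<longleftrightarrow> h b = WHalf)"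
  unfolding fibre_def using same_fibre_iff by auto

lemma bottom_fibre_iff: "b \<in> bottom_fibre A \<longleftrightarrow> b \<in> Car \<and> (\<forall>h\<in>wk_homs A. h b \<noteq> WHalf)"
  unfolding bottom_fibre_def by (auto simp: fibre_iff wk_hom_simps)

lemma bottom_fibre_iff_index: "b \<in> bottom_fibre A \<longleftrightarrow> b \<in> Car \<and> \<iota> b = oA"
proof -
  have "\<iota> b = oA \<longleftrightarrow> (\<forall>h\<in>wk_homs A. h b \<noteq> WHalf)" if b: "b \<in> Car"
  proof
    assume idx: "\<iota> b = oA"
    show "\<forall>h\<in>wk_homs A. h b \<noteq> WHalf"
    proof
      fix h assume h: "h \<in> wk_homs A"
      have "h (\<iota> b) = h oA" using idx by simp
      then show "h b \<noteq> WHalf" using h b by (auto simp: wk_hom_simps split: if_splits)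
    qed
  qed (rule wk_homs_separate, use b in \<open>auto simp: wk_hom_simps\<close>)
  then show ?thesis unfolding bottom_fibre_iff by blast
qed

lemma fibre_top_eq:
  assumes a: "a \<in> Car"
  shows "fibre_top A a = jA a (nA a)"
  unfolding fibre_top_def
proof (rule the_equality)
  show "jA a (nA a) \<in> fibre A a \<and> (\<forall>b\<in>fibre A a. mA b (jA a (nA a)) = b)"
    using a by (auto simp: fibre_iff wk_hom_simps wk_ops_case split: wk.splits intro!: wk_homs_separate)
next
  fix t assume t: "t \<in> fibre A a \<and> (\<forall>b\<in>fibre A a. mA b t = b)"
  have top: "jA a (nA a) \<in> fibre A a"
    using a by (auto simp: fibre_iff wk_hom_simps wk_ops_case split: wk.splits)
  have "mA (jA a (nA a)) t = jA a (nA a)" using t top by blast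
  moreover have "mA (jA a (nA a)) t = t"
  proof (rule wk_homs_separate)
    fix h assume "h \<in> wk_homs A"
    then show "h (mA (jA a (nA a)) t) = h t"
      using a t by (auto simp: fibre_iff wk_hom_simps wk_ops_case split: wk.splits)
  qed (use a t fibre_iff in auto)
  ultimately show "t = jA a (nA a)" by simp
qed

lemma bottom_fibre_closed:
  "x \<in> bottom_fibre A \<Longrightarrow> y \<in> bottom_fibre A \<Longrightarrow> mA x y \<in> bottom_fibre A"
  "x \<in> bottom_fibre A \<Longrightarrow> y \<in> bottom_fibre A \<Longrightarrow> jA x y \<in> bottom_fibre A"
  "x \<in> bottom_fibre A \<Longrightarrow> nA x \<in> bottom_fibre A"
  "x \<in> Car \<Longrightarrow> JA x \<in> bottom_fibre A" "x \<in> Car \<Longrightarrow> \<iota> x \<in> bottom_fibre A"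
  "zA \<in> bottom_fibre A" "oA \<in> bottom_fibre A"
  by (auto simp: bottom_fibre_iff wk_hom_simps wk_ops_case split: wk.splits)

lemma Gamma_simps:
  "bs_carrier (Gamma A) = bottom_fibre A" "bs_meet (Gamma A) = mA" "bs_join (Gamma A) = jA"
  "bs_neg (Gamma A) = nA" "bs_zero (Gamma A) = zA" "bs_one (Gamma A) = oA"
  "bs_I (Gamma A) = \<iota> ` Car"
  unfolding Gamma_def Setcompr_eq_image by (simp_all add: fibre_index_def fibre_top_eq cong: image_cong)

lemma Gamma_boolean_alg: "boolean_alg (Gamma A)"
  unfolding boolean_alg_def Let_def Gamma_simps
  by (intro conjI ballI; (rule bottom_fibre_closed; assumption)?; rule wk_homs_separate)
    (auto simp: bottom_fibre_iff wk_hom_simps wk_ops_case split: wk.splits)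

lemma fibre_index_ops:
  assumes "x \<in> Car" "y \<in> Car"
  shows "\<iota> (mA x y) = mA (\<iota> x) (\<iota> y)" and "\<iota> (jA x y) = mA (\<iota> x) (\<iota> y)" and "\<iota> (nA x) = \<iota> x"
    and "\<iota> (JA x) = oA"
  by (rule wk_homs_separate; use assms in \<open>auto simp: wk_hom_simps wk_ops_case split: wk.splits\<close>)+

lemma index_J2_constants: "\<iota> zA = oA" "\<iota> oA = oA" "JA zA = zA" "JA oA = oA"
  by (rule wk_homs_separate; auto simp: wk_hom_simps wk_ops_case)+

lemma Gamma_bochvar_system: "bochvar_system (Gamma A)"
  using Gamma_boolean_alg fibre_index_ops(1)[symmetric] index_J2_constants(2)[symmetric]
  unfolding bochvar_system_def bochvar_system_axioms_def bool_alg_def Gamma_simps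
  by (auto simp: bottom_fibre_closed)

end

lemma balg_hom_bottom_fibre:
  assumes wf: "balg_wf A" and f: "balg_hom A C f" and b: "b \<in> bottom_fibre A"
  shows "f b \<in> bottom_fibre C"
proof -
  have bA: "b \<in> ba_carrier A" and sf: "same_fibre A (ba_zero A) b"
    using b unfolding bottom_fibre_def fibre_def by auto
  have "ba_join A (ba_zero A) b \<in> ba_carrier A" "ba_join A b (ba_zero A) \<in> ba_carrier A"
    "ba_zero A \<in> ba_carrier A"
    using wf bA unfolding balg_wf_def by auto
  then have "same_fibre C (f (ba_zero A)) (f b)"
    using sf f bA unfolding same_fibre_def balg_hom_def by metis
  then show ?thesis using f bA unfolding bottom_fibre_def fibre_def balg_hom_def by auto
qed

lemma balg_hom_fibre_index:
  assumes wf: "balg_wf A" and f: "balg_hom A C f" and x: "x \<in> ba_carrier A"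
  shows "f (fibre_index A x) = fibre_index C (f x)"
  using assms unfolding balg_wf_def balg_hom_def fibre_index_def by auto

lemma Gamma_mor_bsys_hom:
  assumes A: "bochvar_alg A" and C: "bochvar_alg C" and f: "balg_hom A C f"
  shows "bsys_hom (Gamma A) (Gamma C) (Gamma_mor A f)"
proof -
  interpret A: bochvar A by (rule bochvar.intro[OF A])
  interpret C: bochvar C by (rule bochvar.intro[OF C])
  have on_bottom: "Gamma_mor A f x = f x" if "x \<in> bottom_fibre A" for x
    using that by (simp add: Gamma_mor_def)
  have bottom_Car: "x \<in> ba_carrier A" if "x \<in> bottom_fibre A" for x
    using that by (simp add: A.bottom_fibre_iff)
  have index: "Gamma_mor A f (fibre_index A x) = fibre_index C (f x)" if "x \<in> ba_carrier A" for x
    using that A.bottom_fibre_closed(5) balg_hom_fibre_index[OF A.balg_wf f that]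
    by (simp add: on_bottom)
  show ?thesis
    unfolding bsys_hom_def A.Gamma_simps C.Gamma_simps
  proof (intro conjI ballI)
    show "Gamma_mor A f ` fibre_index A ` ba_carrier A \<subseteq> fibre_index C ` ba_carrier C"
      using index f unfolding balg_hom_def by auto
  qed (use f balg_hom_bottom_fibre[OF A.balg_wf f] A.bottom_fibre_closed bottom_Car in
      \<open>auto simp: on_bottom balg_hom_def\<close>)
qed

lemma Gamma_mor_id: "x \<in> bs_carrier (Gamma A) \<Longrightarrow> Gamma_mor A id x = x"
  by (simp add: Gamma_def Gamma_mor_def)

lemma Gamma_mor_comp:
  assumes A: "bochvar_alg A" and f: "balg_hom A C f" and x: "x \<in> bs_carrier (Gamma A)"
  shows "Gamma_mor A (h \<circ> f) x = Gamma_mor C h (Gamma_mor A f x)"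
proof -
  interpret bochvar A by (rule bochvar.intro[OF A])
  show ?thesis using x balg_hom_bottom_fibre[OF balg_wf f] by (simp add: Gamma_simps Gamma_mor_def)
qed

section \<open>The unit\<close>

lemma balg_isoI:
  assumes wf: "balg_wf A" and f: "balg_hom A C f" and inj: "inj_on f (ba_carrier A)"
    and surj: "ba_carrier C \<subseteq> f ` ba_carrier A"
  shows "balg_iso A C f"
proof -
  define g where "g = inv_into (ba_carrier A) f"
  have gC: "\<And>y. y \<in> ba_carrier C \<Longrightarrow> g y \<in> ba_carrier A \<and> f (g y) = y"
    unfolding g_def using surj by (auto intro: inv_into_into f_inv_into_f)
  have gf: "\<And>x. x \<in> ba_carrier A \<Longrightarrow> g (f x) = x" unfolding g_def using inj by simp
  have cl: "\<And>x y. x \<in> ba_carrier A \<Longrightarrow> y \<in> ba_carrier A \<Longrightarrow> ba_meet A x y \<in> ba_carrier A \<and> ba_join A x y \<in> ba_carrier A"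
    "\<And>x. x \<in> ba_carrier A \<Longrightarrow> ba_neg A x \<in> ba_carrier A \<and> ba_J2 A x \<in> ba_carrier A"
    "ba_zero A \<in> ba_carrier A" "ba_one A \<in> ba_carrier A"
    using wf unfolding balg_wf_def by auto
  have fh: "\<And>x y. x \<in> ba_carrier A \<Longrightarrow> y \<in> ba_carrier A \<Longrightarrow>
      f (ba_meet A x y) = ba_meet C (f x) (f y) \<and> f (ba_join A x y) = ba_join C (f x) (f y)"
    "\<And>x. x \<in> ba_carrier A \<Longrightarrow> f (ba_neg A x) = ba_neg C (f x) \<and> f (ba_J2 A x) = ba_J2 C (f x)"
    "f (ba_zero A) = ba_zero C" "f (ba_one A) = ba_one C"
    using f unfolding balg_hom_def by auto
  have "balg_hom C A g" unfolding balg_hom_def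
  proof (intro conjI ballI)
    fix y1 y2 assume y: "y1 \<in> ba_carrier C" "y2 \<in> ba_carrier C"
    show "g (ba_meet C y1 y2) = ba_meet A (g y1) (g y2)"
      using gC[OF y(1)] gC[OF y(2)] fh(1)[of "g y1" "g y2"] gf cl(1) by metis
    show "g (ba_join C y1 y2) = ba_join A (g y1) (g y2)"
      using gC[OF y(1)] gC[OF y(2)] fh(1)[of "g y1" "g y2"] gf cl(1) by metis
  next
    fix y assume y: "y \<in> ba_carrier C"
    show "g y \<in> ba_carrier A" using gC[OF y] by simp
    show "g (ba_neg C y) = ba_neg A (g y)" using gC[OF y] fh(2)[of "g y"] gf cl(2) by metis
    show "g (ba_J2 C y) = ba_J2 A (g y)" using gC[OF y] fh(2)[of "g y"] gf cl(2) by metis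
  next
    show "g (ba_zero C) = ba_zero A" using fh(3) gf cl(3) by metis
    show "g (ba_one C) = ba_one A" using fh(4) gf cl(4) by metis
  qed
  then show ?thesis unfolding balg_iso_def using f gC gf by blast
qed
definition unit_map :: "'a balg \<Rightarrow> 'a \<Rightarrow> 'a \<times> 'a set" where
  "unit_map A x = (fibre_index A x, cls (Gamma A) (fibre_index A x) (ba_J2 A x))"

context bochvar
begin

lemma J2_ops_mod_index:
  assumes "x \<in> Car" "y \<in> Car"
  shows "JA (mA x y) = mA (JA x) (JA y)"
    and "mA (JA (jA x y)) (mA (\<iota> x) (\<iota> y)) = mA (jA (JA x) (JA y)) (mA (\<iota> x) (\<iota> y))"
    and "mA (JA (nA x)) (\<iota> x) = mA (nA (JA x)) (\<iota> x)"
    and "JA (JA x) = mA (JA x) (\<iota> x)"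
  by (rule wk_homs_separate; use assms in \<open>auto simp: wk_hom_simps wk_ops_case split: wk.splits\<close>)+

lemma eq_if_index_J2_eq:
  assumes x: "x \<in> Car" and y: "y \<in> Car" and idx: "\<iota> x = \<iota> y"
    and J2: "mA (JA x) (\<iota> x) = mA (JA y) (\<iota> x)"
  shows "x = y"
proof (rule wk_homs_separate[OF x y])
  fix h assume h: "h \<in> wk_homs A"
  have "h (\<iota> x) = h (\<iota> y)" "h (mA (JA x) (\<iota> x)) = h (mA (JA y) (\<iota> x))" using idx J2 by simp_all
  then show "h x = h y" using h x y by (auto simp: wk_hom_simps wk_ops_case split: wk.splits)
qed

text \<open>c \<and> \<not>c is the zero of the fibre of c, so joining it moves a from the bottom fibre into that
  fibre; this is the preimage of a/[\<iota> c) under the unit.\<close>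
lemma index_J2_fibre_shift:
  assumes a: "a \<in> bottom_fibre A" and c: "c \<in> Car"
  shows "\<iota> (jA a (mA c (nA c))) = \<iota> c"
    and "mA (JA (jA a (mA c (nA c)))) (\<iota> c) = mA a (\<iota> c)"
  by (rule wk_homs_separate;
      use a c in \<open>auto simp: bottom_fibre_iff wk_hom_simps wk_ops_case split: wk.splits\<close>)+

lemma unit_map_balg_hom: "balg_hom A (Xi (Gamma A)) (unit_map A)"
proof -
  interpret G: bochvar_system "Gamma A" by (rule Gamma_bochvar_system)
  note Xi_ops = G.Xi_ops[unfolded Gamma_simps] and cls_eq = G.cls_eq_iff_meet[unfolded Gamma_simps]
  show ?thesis
    unfolding balg_hom_def unit_map_def
    by (auto simp: Xi_ops cls_eq fibre_index_ops J2_ops_mod_index index_J2_constants bottom_fibre_closed Gamma_simps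
        intro!: G.Xi_carrierI)
qed

lemma unit_map_iso: "balg_iso A (Xi (Gamma A)) (unit_map A)"
proof (rule balg_isoI[OF balg_wf unit_map_balg_hom])
  interpret G: bochvar_system "Gamma A" by (rule Gamma_bochvar_system)
  note cls_eq = G.cls_eq_iff_meet[unfolded Gamma_simps]
  note in_bottom = bottom_fibre_closed(5,4)
  show "inj_on (unit_map A) Car"
  proof (rule inj_onI)
    fix x y assume x: "x \<in> Car" and y: "y \<in> Car" and eq: "unit_map A x = unit_map A y"
    have idx: "\<iota> x = \<iota> y" using eq by (simp add: unit_map_def)
    moreover have "cls (Gamma A) (\<iota> x) (JA x) = cls (Gamma A) (\<iota> x) (JA y)"
      using eq by (simp add: unit_map_def idx)
    ultimately have "mA (JA x) (\<iota> x) = mA (JA y) (\<iota> x)"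
      using cls_eq[of "\<iota> x" "JA x" "JA y"] in_bottom[OF x] in_bottom[OF y] by blast
    then show "x = y" using eq_if_index_J2_eq x y idx by blast
  qed
  show "ba_carrier (Xi (Gamma A)) \<subseteq> unit_map A ` Car"
  proof
    fix p assume "p \<in> ba_carrier (Xi (Gamma A))"
    then obtain c a where p: "p = (\<iota> c, cls (Gamma A) (\<iota> c) a)" "c \<in> Car" "a \<in> bottom_fibre A"
      by (auto elim!: G.Xi_carrierE simp: Gamma_simps)
    define x where "x = jA a (mA c (nA c))"
    have x: "x \<in> Car" using p bottom_fibre_iff unfolding x_def by auto
    have "\<iota> x = \<iota> c" and "mA (JA x) (\<iota> c) = mA a (\<iota> c)"
      using index_J2_fibre_shift[OF p(3,2)] unfolding x_def by simp_all
    moreover have "cls (Gamma A) (\<iota> c) (JA x) = cls (Gamma A) (\<iota> c) a \<longleftrightarrow> mA (JA x) (\<iota> c) = mA a (\<iota> c)"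
      using cls_eq in_bottom[OF p(2)] in_bottom[OF x] p(3) by blast
    ultimately have "unit_map A x = p" unfolding unit_map_def p(1) by simp
    then show "p \<in> unit_map A ` Car" using x by blast
  qed
qed

end

lemma unit_map_natural:
  assumes A: "bochvar_alg A" and C: "bochvar_alg C" and f: "balg_hom A C f"
  shows "unit_square (unit_map A) (unit_map C) A C f"
  unfolding unit_square_def
proof
  interpret A: bochvar A by (rule bochvar.intro[OF A])
  interpret C: bochvar C by (rule bochvar.intro[OF C])
  fix x assume x: "x \<in> ba_carrier A"
  note in_bottom = A.bottom_fibre_closed(5,4)[OF x]
  have "f (ba_J2 A x) = ba_J2 C (f x)" using f x unfolding balg_hom_def by auto
  then show "Xi_mor (Gamma C) (Gamma_mor A f) (unit_map A x) = unit_map C (f x)"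
    using Xi_mor_cls[OF A.Gamma_bochvar_system[THEN bochvar_system.axioms(1)]
        C.Gamma_bochvar_system[THEN bochvar_system.axioms(1)] Gamma_mor_bsys_hom[OF A C f]]
      in_bottom balg_hom_fibre_index[OF A.balg_wf f x]
    by (simp add: unit_map_def A.Gamma_simps Gamma_mor_def)
qed

section \<open>The counit\<close>

lemma bsys_isoI:
  assumes S: "bool_alg S" and IS: "bs_I S \<subseteq> bs_carrier S" and f: "bsys_hom S T f"
    and inj: "inj_on f (bs_carrier S)"
    and surj: "bs_carrier T \<subseteq> f ` bs_carrier S" and surjI: "bs_I T \<subseteq> f ` bs_I S"
  shows "bsys_iso S T f"
proof -
  interpret bool_alg S by fact
  define g where "g = inv_into (bs_carrier S) f"
  have gC: "\<And>y. y \<in> bs_carrier T \<Longrightarrow> g y \<in> bs_carrier S \<and> f (g y) = y"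
    unfolding g_def using surj by (auto intro: inv_into_into f_inv_into_f)
  have gf: "\<And>x. x \<in> bs_carrier S \<Longrightarrow> g (f x) = x" unfolding g_def using inj by simp
  have fh: "\<And>x y. x \<in> B \<Longrightarrow> y \<in> B \<Longrightarrow>
      f (meet x y) = bs_meet T (f x) (f y) \<and> f (join x y) = bs_join T (f x) (f y)"
    "\<And>x. x \<in> B \<Longrightarrow> f (neg x) = bs_neg T (f x)"
    "f zero = bs_zero T" "f one = bs_one T"
    using f unfolding bsys_hom_def by auto
  have "bsys_hom T S g" unfolding bsys_hom_def
  proof (intro conjI ballI)
    fix y1 y2 assume y: "y1 \<in> bs_carrier T" "y2 \<in> bs_carrier T"
    show "g (bs_meet T y1 y2) = meet (g y1) (g y2)"
      using gC[OF y(1)] gC[OF y(2)] fh(1)[of "g y1" "g y2"] gf meet_closed by metis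
    show "g (bs_join T y1 y2) = join (g y1) (g y2)"
      using gC[OF y(1)] gC[OF y(2)] fh(1)[of "g y1" "g y2"] gf join_closed by metis
  next
    fix y assume y: "y \<in> bs_carrier T"
    show "g y \<in> B" using gC[OF y] by simp
    show "g (bs_neg T y) = neg (g y)" using gC[OF y] fh(2)[of "g y"] gf neg_closed by metis
  next
    show "g (bs_zero T) = zero" using fh(3) gf zero_closed by metis
    show "g (bs_one T) = one" using fh(4) gf one_closed by metis
    show "g ` bs_I T \<subseteq> bs_I S"
    proof
      fix y assume "y \<in> g ` bs_I T"
      then obtain x where x: "x \<in> bs_I S" "y = g (f x)" using surjI by auto
      then show "y \<in> bs_I S" using gf IS by auto
    qed
  qed
  then show ?thesis unfolding bsys_iso_def using f gC gf by blast
qed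

context bochvar_system
begin

lemma Xi_fibre_index:
  assumes "i \<in> B" "a \<in> B"
  shows "fibre_index (Xi S) (i, cls S i a) = (one, cls S one i)"
proof -
  have "meet (join a (neg a)) (meet i i) = i"
    using assms by (simp add: join_neg meet_idem meet_comm[of one] meet_one)
  then show ?thesis using assms by (simp add: fibre_index_def Xi_ops)
qed

lemma Gamma_Xi_carrier: "bs_carrier (Gamma (Xi S)) = {(one, cls S one a) | a. a \<in> B}"
proof -
  interpret X: bochvar "Xi S" by (rule bochvar.intro[OF Xi_bochvar_alg])
  have index_one: "(one, cls S one i) = ba_one (Xi S) \<longleftrightarrow> i = one" if "i \<in> B" for i
    using that by (auto simp: Xi_one cls_one)
  show ?thesis
    unfolding X.Gamma_simps
    by (rule set_eqI) (auto simp: X.bottom_fibre_iff_index Xi_fibre_index index_one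
        elim!: Xi_carrierE intro!: Xi_carrierI one_in_I)
qed

lemma Gamma_Xi_I: "bs_I (Gamma (Xi S)) = {(one, cls S one i) | i. i \<in> bs_I S}"
proof -
  interpret X: bochvar "Xi S" by (rule bochvar.intro[OF Xi_bochvar_alg])
  show ?thesis
    unfolding X.Gamma_simps
    by (auto elim!: Xi_carrierE simp: Xi_fibre_index image_iff) (metis I_subset Xi_carrierI Xi_fibre_index zero_closed subsetD)
qed

end

definition counit_map :: "'b \<times> 'b set \<Rightarrow> 'b" where
  "counit_map p = rep (snd p)"

context bochvar_system
begin

lemma counit_map_cls: "a \<in> B \<Longrightarrow> counit_map (one, cls S one a) = a"
  by (simp add: counit_map_def cls_one rep_singleton)

lemma counit_map_iso: "bsys_iso (Gamma (Xi S)) S counit_map"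
proof -
  interpret X: bochvar "Xi S" by (rule bochvar.intro[OF Xi_bochvar_alg])
  interpret G: bochvar_system "Gamma (Xi S)" by (rule X.Gamma_bochvar_system)
  have hom: "bsys_hom (Gamma (Xi S)) S counit_map"
    unfolding bsys_hom_def Gamma_Xi_I
    by (auto simp: Gamma_Xi_carrier X.Gamma_simps Xi_ops counit_map_cls meet_idem I_subset[THEN subsetD])
  have inj: "inj_on counit_map (bs_carrier (Gamma (Xi S)))"
    unfolding Gamma_Xi_carrier by (rule inj_onI) (auto simp: counit_map_cls)
  have "B \<subseteq> counit_map ` bs_carrier (Gamma (Xi S))" "bs_I S \<subseteq> counit_map ` bs_I (Gamma (Xi S))"
    unfolding Gamma_Xi_carrier Gamma_Xi_I using counit_map_cls I_subset by force+
  then show ?thesis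
    using bsys_isoI[OF G.bool_alg_axioms G.I_subset hom inj] by blast
qed

end

lemma counit_map_natural:
  assumes S: "bochvar_system S" and T: "bochvar_system T" and g: "bsys_hom S T g"
  shows "counit_square counit_map counit_map S T g"
  unfolding counit_square_def
proof
  interpret S: bochvar_system S by fact
  interpret T: bochvar_system T by fact
  fix p assume "p \<in> bs_carrier (Gamma (Xi S))"
  then obtain a where p: "p = (bs_one S, cls S (bs_one S) a)" "a \<in> bs_carrier S"
    by (auto simp: S.Gamma_Xi_carrier)
  have "p \<in> bottom_fibre (Xi S)" "g a \<in> bs_carrier T" "g (bs_one S) = bs_one T"
    using p g S.Gamma_Xi_carrier unfolding bsys_hom_def by (auto simp: Gamma_def)
  then show "g (counit_map p) = counit_map (Gamma_mor (Xi S) (Xi_mor T g) p)"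
    using p Xi_mor_cls[OF S.bool_alg_axioms T.bool_alg_axioms g, of "bs_one S" a]
    by (simp add: Gamma_mor_def S.counit_map_cls T.counit_map_cls)
qed

theorem theorem3p9:
  shows
  \<comment> \<open>Gamma is a functor from Bochvar algebras to Bochvar systems\<close>
  "(\<forall>A :: 'a balg. bochvar_alg A \<longrightarrow> bochvar_sys (Gamma A)) \<and>
   (\<forall>(A :: 'a balg) (C :: 'c balg) f. bochvar_alg A \<and> bochvar_alg C \<and> balg_hom A C f \<longrightarrow>
        bsys_hom (Gamma A) (Gamma C) (Gamma_mor A f)) \<and>
   (\<forall>A :: 'a balg. bochvar_alg A \<longrightarrow> (\<forall>x\<in>bs_carrier (Gamma A). Gamma_mor A id x = x)) \<and>
   (\<forall>(A :: 'a balg) (C :: 'c balg) (D :: 'a balg) f h.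
        bochvar_alg A \<and> bochvar_alg C \<and> bochvar_alg D \<and> balg_hom A C f \<and> balg_hom C D h \<longrightarrow>
        (\<forall>x\<in>bs_carrier (Gamma A). Gamma_mor A (h \<circ> f) x = Gamma_mor C h (Gamma_mor A f x))) \<and>
  \<comment> \<open>Xi is a functor from Bochvar systems to Bochvar algebras\<close>
   (\<forall>S :: 'b bsys. bochvar_sys S \<longrightarrow> bochvar_alg (Xi S)) \<and>
   (\<forall>(S :: 'b bsys) (T :: 'd bsys) g. bochvar_sys S \<and> bochvar_sys T \<and> bsys_hom S T g \<longrightarrow>
        balg_hom (Xi S) (Xi T) (Xi_mor T g)) \<and>
   (\<forall>S :: 'b bsys. bochvar_sys S \<longrightarrow> (\<forall>p\<in>ba_carrier (Xi S). Xi_mor S id p = p)) \<and>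
   (\<forall>(S :: 'b bsys) (T :: 'd bsys) (U :: 'b bsys) g k.
        bochvar_sys S \<and> bochvar_sys T \<and> bochvar_sys U \<and> bsys_hom S T g \<and> bsys_hom T U k \<longrightarrow>
        (\<forall>p\<in>ba_carrier (Xi S). Xi_mor U (k \<circ> g) p = Xi_mor U k (Xi_mor T g p))) \<and>
  \<comment> \<open>natural isomorphism eta : Id \<Rightarrow> Xi o Gamma\<close>
   (\<exists>(etaA :: 'a balg \<Rightarrow> 'a \<Rightarrow> 'a \<times> 'a set) (etaC :: 'c balg \<Rightarrow> 'c \<Rightarrow> 'c \<times> 'c set).
      (\<forall>A. bochvar_alg A \<longrightarrow> balg_iso A (Xi (Gamma A)) (etaA A)) \<and>
      (\<forall>C. bochvar_alg C \<longrightarrow> balg_iso C (Xi (Gamma C)) (etaC C)) \<and>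
      (\<forall>A A' f. bochvar_alg A \<and> bochvar_alg A' \<and> balg_hom A A' f \<longrightarrow>
          unit_square (etaA A) (etaA A') A A' f) \<and>
      (\<forall>A C f. bochvar_alg A \<and> bochvar_alg C \<and> balg_hom A C f \<longrightarrow>
          unit_square (etaA A) (etaC C) A C f) \<and>
      (\<forall>C A f. bochvar_alg C \<and> bochvar_alg A \<and> balg_hom C A f \<longrightarrow>
          unit_square (etaC C) (etaA A) C A f) \<and>
      (\<forall>C C' f. bochvar_alg C \<and> bochvar_alg C' \<and> balg_hom C C' f \<longrightarrow>
          unit_square (etaC C) (etaC C') C C' f)) \<and>
  \<comment> \<open>natural isomorphism eps : Gamma o Xi \<Rightarrow> Id\<close>
   (\<exists>(epsB :: 'b bsys \<Rightarrow> 'b \<times> 'b set \<Rightarrow> 'b) (epsD :: 'd bsys \<Rightarrow> 'd \<times> 'd set \<Rightarrow> 'd).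
      (\<forall>S. bochvar_sys S \<longrightarrow> bsys_iso (Gamma (Xi S)) S (epsB S)) \<and>
      (\<forall>T. bochvar_sys T \<longrightarrow> bsys_iso (Gamma (Xi T)) T (epsD T)) \<and>
      (\<forall>S S' g. bochvar_sys S \<and> bochvar_sys S' \<and> bsys_hom S S' g \<longrightarrow>
          counit_square (epsB S) (epsB S') S S' g) \<and>
      (\<forall>S T g. bochvar_sys S \<and> bochvar_sys T \<and> bsys_hom S T g \<longrightarrow>
          counit_square (epsB S) (epsD T) S T g) \<and>
      (\<forall>T S g. bochvar_sys T \<and> bochvar_sys S \<and> bsys_hom T S g \<longrightarrow>
          counit_square (epsD T) (epsB S) T S g) \<and>
      (\<forall>T T' g. bochvar_sys T \<and> bochvar_sys T' \<and> bsys_hom T T' g \<longrightarrow>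
          counit_square (epsD T) (epsD T') T T' g))"
proof -
  note Gamma_functor = bochvar.Gamma_bochvar_system Gamma_mor_bsys_hom Gamma_mor_id Gamma_mor_comp
  note Xi_functor = bochvar_system.Xi_bochvar_alg Xi_mor_balg_hom Xi_mor_id Xi_mor_comp
  note unit = bochvar.unit_map_iso unit_map_natural
  note counit = bochvar_system.counit_map_iso counit_map_natural
  show ?thesis
    by (intro conjI exI[of _ unit_map] exI[of _ "\<lambda>_. counit_map"])
      (auto simp: bochvar_system_iff[symmetric] intro: bochvar.intro Gamma_functor Xi_functor unit counit)
qed

end
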